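(* Let $(G,\cdot,N,\star,\odot)$ be a left bracoid, i.e. a left skew bracoid in which $(N,\star)$ is abelian. Then for every $g\in G$ the map $\alpha(g):N\to N$, ${}^{\alpha(g)}\eta=\overline{(g\odot e_N)}\star(g\odot\eta)\star\overline{\eta}$, is an endomorphism of the group $(N,\star)$.
   Context: For a group $(N,\star)$, $e_N$ denotes its identity and $\overline{\eta}$ the inverse of $\eta$. A left skew bracoid is a 5-tuple $(G,\cdot,N,\star,\odot)$ where $(G,\cdot)$ and $(N,\star)$ are groups and $\odot$ is a transitive (left) action of $(G,\cdot)$ on the set $N$ such that $g\odot(\mu\star\eta)=(g\odot\mu)\star\overline{(g\odot e_N)}\star(g\odot\eta)$ for all $g\in G$, $\mu,\eta\in N$. *)

theory Defs
  imports "HOL-Algebra.Group"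
begin

definition transitive_action :: "('g, 'a) monoid_scheme \<Rightarrow> 'n set \<Rightarrow> ('g \<Rightarrow> 'n \<Rightarrow> 'n) \<Rightarrow> bool" where
  "transitive_action G X act \<longleftrightarrow>
     (\<forall>g\<in>carrier G. \<forall>x\<in>X. act g x \<in> X) \<and>
     (\<forall>x\<in>X. act \<one>\<^bsub>G\<^esub> x = x) \<and>
     (\<forall>g\<in>carrier G. \<forall>h\<in>carrier G. \<forall>x\<in>X. act (g \<otimes>\<^bsub>G\<^esub> h) x = act g (act h x)) \<and>
     (\<forall>x\<in>X. \<forall>y\<in>X. \<exists>g\<in>carrier G. act g x = y)"

definition skew_bracoid :: "('g, 'a) monoid_scheme \<Rightarrow> ('n, 'b) monoid_scheme \<Rightarrow> ('g \<Rightarrow> 'n \<Rightarrow> 'n) \<Rightarrow> bool" where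
  "skew_bracoid G N act \<longleftrightarrow>
     group G \<and> group N \<and> transitive_action G (carrier N) act \<and>
     (\<forall>g\<in>carrier G. \<forall>\<mu>\<in>carrier N. \<forall>\<eta>\<in>carrier N.
        act g (\<mu> \<otimes>\<^bsub>N\<^esub> \<eta>) = act g \<mu> \<otimes>\<^bsub>N\<^esub> inv\<^bsub>N\<^esub> (act g \<one>\<^bsub>N\<^esub>) \<otimes>\<^bsub>N\<^esub> act g \<eta>)"

definition bracoid :: "('g, 'a) monoid_scheme \<Rightarrow> ('n, 'b) monoid_scheme \<Rightarrow> ('g \<Rightarrow> 'n \<Rightarrow> 'n) \<Rightarrow> bool" where
  "bracoid G N act \<longleftrightarrow> skew_bracoid G N act \<and> comm_group N"

end

theory Submission
  imports Defs
begin

(* The compatibility axiom says that eta \<mapsto> g \<odot> eta is an affine map of N, so that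
   gamma(g) = eta \<mapsto> (g \<odot> e_N)\<inverse> \<star> (g \<odot> eta) is an endomorphism of N in every skew
   bracoid. When N is abelian, inversion is an endomorphism as well, and alpha(g) is the
   pointwise product of gamma(g) and inversion. *)

lemma affine_map_translate_hom:
  assumes "monoid G" and "group H" and f: "f \<in> carrier G \<rightarrow> carrier H"
    and affine: "\<And>x y. x \<in> carrier G \<Longrightarrow> y \<in> carrier G \<Longrightarrow>
      f (x \<otimes>\<^bsub>G\<^esub> y) = f x \<otimes>\<^bsub>H\<^esub> inv\<^bsub>H\<^esub> (f \<one>\<^bsub>G\<^esub>) \<otimes>\<^bsub>H\<^esub> f y"
  shows "(\<lambda>x. inv\<^bsub>H\<^esub> (f \<one>\<^bsub>G\<^esub>) \<otimes>\<^bsub>H\<^esub> f x) \<in> hom G H"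
proof -
  interpret G: monoid G by fact
  interpret H: group H by fact
  have f_one: "f \<one>\<^bsub>G\<^esub> \<in> carrier H" using f by blast
  show ?thesis
  proof (rule homI)
    show "inv\<^bsub>H\<^esub> (f \<one>\<^bsub>G\<^esub>) \<otimes>\<^bsub>H\<^esub> f x \<in> carrier H" if "x \<in> carrier G" for x
      using that f f_one by blast
  next
    fix x y assume x: "x \<in> carrier G" and y: "y \<in> carrier G"
    then have "f x \<in> carrier H" "f y \<in> carrier H" using f by blast+
    then show "inv\<^bsub>H\<^esub> (f \<one>\<^bsub>G\<^esub>) \<otimes>\<^bsub>H\<^esub> f (x \<otimes>\<^bsub>G\<^esub> y) =
        (inv\<^bsub>H\<^esub> (f \<one>\<^bsub>G\<^esub>) \<otimes>\<^bsub>H\<^esub> f x) \<otimes>\<^bsub>H\<^esub> (inv\<^bsub>H\<^esub> (f \<one>\<^bsub>G\<^esub>) \<otimes>\<^bsub>H\<^esub> f y)"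
      using f_one by (simp add: affine x y H.m_assoc)
  qed
qed

lemma (in comm_group) inv_hom: "(\<lambda>x. inv x) \<in> hom G G"
  by (rule homI) (simp_all add: inv_mult)

lemma skew_bracoid_act_closed:
  assumes "skew_bracoid G N act" and "g \<in> carrier G" and "\<eta> \<in> carrier N"
  shows "act g \<eta> \<in> carrier N"
  using assms unfolding skew_bracoid_def transitive_action_def by blast

lemma skew_bracoid_act_mult:
  assumes "skew_bracoid G N act" and "g \<in> carrier G"
    and "\<mu> \<in> carrier N" and "\<eta> \<in> carrier N"
  shows "act g (\<mu> \<otimes>\<^bsub>N\<^esub> \<eta>) = act g \<mu> \<otimes>\<^bsub>N\<^esub> inv\<^bsub>N\<^esub> (act g \<one>\<^bsub>N\<^esub>) \<otimes>\<^bsub>N\<^esub> act g \<eta>"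
  using assms unfolding skew_bracoid_def by blast

lemma skew_bracoid_gamma_hom:
  assumes "skew_bracoid G N act" and "g \<in> carrier G"
  shows "(\<lambda>\<eta>. inv\<^bsub>N\<^esub> (act g \<one>\<^bsub>N\<^esub>) \<otimes>\<^bsub>N\<^esub> act g \<eta>) \<in> hom N N"
proof -
  have "group N" using assms(1) by (simp add: skew_bracoid_def)
  then show ?thesis
    using assms by (intro affine_map_translate_hom)
      (auto intro: group.is_monoid skew_bracoid_act_closed skew_bracoid_act_mult)
qed

theorem corollary2p5:
  fixes G :: "('g, 'a) monoid_scheme" and N :: "('n, 'b) monoid_scheme"
    and act :: "'g \<Rightarrow> 'n \<Rightarrow> 'n"
  assumes "bracoid G N act" and "g \<in> carrier G"
  shows "(\<lambda>\<eta>. inv\<^bsub>N\<^esub> (act g \<one>\<^bsub>N\<^esub>) \<otimes>\<^bsub>N\<^esub> act g \<eta> \<otimes>\<^bsub>N\<^esub> inv\<^bsub>N\<^esub> \<eta>) \<in> hom N N"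
proof -
  have skew: "skew_bracoid G N act" and abelian: "comm_group N"
    using assms(1) by (simp_all add: bracoid_def)
  show ?thesis
    using comm_group.hom_group_mult[OF abelian skew_bracoid_gamma_hom[OF skew assms(2)]
        comm_group.inv_hom[OF abelian]] .
qed

end
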